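(* Let $I$ be a non-empty descent set with $s=s(I)$ and Naruse-Newton coefficients $(C_0,\ldots,C_s)$. Then $\frac{C_0}{0!}=\frac{C_1}{1!}=\cdots=\frac{C_s}{s!}$ if and only if $I$ is a shallow descent set.
   Context: Partitions are drawn as Young diagrams $\mathbb{D}(\lambda)$ in English notation; $c_{i,j}$ is the cell in row $i$, column $j$; $\lambda'$ is the conjugate partition ($\lambda'_j$ = number of cells in column $j$). The hook length $h_\lambda(c)$ is the number of cells of $\mathbb{D}(\lambda)$ weakly right of $c$ in its row or weakly below $c$ in its column (counting $c$ once). For $\mu\subseteq\lambda$, an excited diagram of $\lambda/\mu$ is a subset of $\mathbb{D}(\lambda)$ obtained from $\mathbb{D}(\mu)$ by repeatedly replacing a cell $c_{i,j}\in D$ by $c_{i+1,j+1}$, allowed iff $c_{i+1,j+1}\in\mathbb{D}(\lambda)$ and none of $c_{i,j+1},c_{i+1,j},c_{i+1,j+1}$ lies in $D$; $\mathbb{E}(\lambda/\mu)$ is their set. A ribbon with $n$ cells is read from its lower-left to its upper-right cell, each successive cell directly right of or directly above the previous; it corresponds to the set of $i\in\{1,\ldots,n-1\}$ with cell $i$ directly below cell $i+1$. A descent set is a non-empty finite set $I$ of positive integers; $\lambda^I$ is the unique partition with $\lambda^I_1=\lambda^I_2$ such that the cells $c_{i,j}\in\mathbb{D}(\lambda^I)$ with fewer than three of $c_{i,j+1},c_{i+1,j},c_{i+1,j+1}$ in $\mathbb{D}(\lambda^I)$ form a ribbon corresponding to $I$; this ribbon is $\mathbb{D}(\lambda^I)\setminus\mathbb{D}(\mu^I)$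 for a partition $\mu^I$. Let $s(I)=\lambda^I_1-1$. Naruse-Newton coefficients: every excited diagram of $\lambda^I/\mu^I$ meets row 1 in $\{c_{1,1},\ldots,c_{1,r}\}$, $0\le r\le s$; for $0\le j\le s(I)$, $C_j(I)=\sum_D\prod_{c\in D,\,c\notin\text{row }1}h_{\lambda^I}(c)$, summed over $D\in\mathbb{E}(\lambda^I/\mu^I)$ with exactly $s-j$ cells in row 1. $w(I)$ is the number of integers $j$ with $1\le j\le s(I)+1$ and $(\lambda^I)'_j=2$. $I$ is deep if $w(I)<s(I)$ and shallow otherwise. *)

theory Defs
  imports Complex_Main
begin

text \<open>Cells are pairs (row, column), 1-indexed, English notation (rows grow downward).
  A partition is a weakly decreasing list of positive naturals.\<close>

type_synonym cell = "nat \<times> nat"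

definition is_partition :: "nat list \<Rightarrow> bool" where
  "is_partition lam \<longleftrightarrow> sorted_wrt (\<ge>) lam \<and> 0 \<notin> set lam"

definition part :: "nat list \<Rightarrow> nat \<Rightarrow> nat" where
  "part lam i = (if 1 \<le> i \<and> i \<le> length lam then lam ! (i - 1) else 0)"

definition young :: "nat list \<Rightarrow> cell set" where
  "young lam = {(i, j). 1 \<le> i \<and> i \<le> length lam \<and> 1 \<le> j \<and> j \<le> lam ! (i - 1)}"

definition conj_part :: "nat list \<Rightarrow> nat \<Rightarrow> nat" where
  "conj_part lam j = card {i. (i, j) \<in> young lam}"

definition hook :: "nat list \<Rightarrow> cell \<Rightarrow> nat" where
  "hook lam c = card {j'. (fst c, j') \<in> young lam \<and> snd c \<le> j'}
              + card {i'. (i', snd c) \<in> young lam \<and> fst c < i'}"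

inductive_set excited :: "nat list \<Rightarrow> nat list \<Rightarrow> cell set set" for lam mu where
  base: "young mu \<in> excited lam mu"
| step: "D \<in> excited lam mu \<Longrightarrow> (i, j) \<in> D \<Longrightarrow> (i + 1, j + 1) \<in> young lam \<Longrightarrow>
         (i, j + 1) \<notin> D \<Longrightarrow> (i + 1, j) \<notin> D \<Longrightarrow> (i + 1, j + 1) \<notin> D \<Longrightarrow>
         insert (i + 1, j + 1) (D - {(i, j)}) \<in> excited lam mu"

definition ribbon_of :: "cell set \<Rightarrow> nat set \<Rightarrow> bool" where
  "ribbon_of R I \<longleftrightarrow> (\<exists>n (c :: nat \<Rightarrow> cell). 1 \<le> n \<and> R = c ` {1..n} \<and>
     (\<forall>k\<in>{1..n}. 1 \<le> fst (c k) \<and> 1 \<le> snd (c k)) \<and>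
     (\<forall>k\<in>{1..<n}.
        (c (Suc k) = (fst (c k), snd (c k) + 1) \<or> c k = (fst (c (Suc k)) + 1, snd (c (Suc k))))) \<and>
     I = {k \<in> {1..<n}. c k = (fst (c (Suc k)) + 1, snd (c (Suc k)))})"

definition outer :: "nat list \<Rightarrow> cell set" where
  "outer lam = {(i, j) \<in> young lam.
      \<not> ((i, j + 1) \<in> young lam \<and> (i + 1, j) \<in> young lam \<and> (i + 1, j + 1) \<in> young lam)}"

definition descent_set :: "nat set \<Rightarrow> bool" where
  "descent_set I \<longleftrightarrow> finite I \<and> I \<noteq> {} \<and> (\<forall>i\<in>I. 0 < i)"

definition lamI :: "nat set \<Rightarrow> nat list" where
  "lamI I = (THE lam. is_partition lam \<and> part lam 1 = part lam 2 \<and> ribbon_of (outer lam) I)"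

definition muI :: "nat set \<Rightarrow> nat list" where
  "muI I = (THE mu. is_partition mu \<and> young mu \<subseteq> young (lamI I) \<and>
                    young (lamI I) - young mu = outer (lamI I))"

definition sI :: "nat set \<Rightarrow> nat" where
  "sI I = part (lamI I) 1 - 1"

definition NN_coeff :: "nat set \<Rightarrow> nat \<Rightarrow> nat" where
  "NN_coeff I j = (\<Sum>D \<in> {D \<in> excited (lamI I) (muI I). card {c \<in> D. fst c = 1} = sI I - j}.
                     \<Prod>c \<in> {c \<in> D. fst c \<noteq> 1}. hook (lamI I) c)"

definition wI :: "nat set \<Rightarrow> nat" where
  "wI I = card {j. 1 \<le> j \<and> j \<le> sI I + 1 \<and> conj_part (lamI I) j = 2}"

definition deep :: "nat set \<Rightarrow> bool" where
  "deep I \<longleftrightarrow> wI I < sI I"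

definition shallow :: "nat set \<Rightarrow> bool" where
  "shallow I \<longleftrightarrow> \<not> deep I"

end

theory Submission
  imports Defs "HOL-Library.Product_Lexorder"
begin

text \<open>
  The shape \<open>\<lambda>\<^sup>I\<close> is the partition with two equal top rows whose rim is the ribbon of \<open>I\<close>.
  It is built by induction on \<open>max I\<close> (a descent at 1 appends a row of length one, an ascent
  adds a first column) and is unique because its rim is determined by \<open>I\<close> and determines the
  diagram. Its inner shape \<open>\<mu>\<^sup>I\<close> consists of the cells whose diagonal successor lies in
  \<open>\<lambda>\<^sup>I\<close>, and \<open>I\<close> is deep exactly when \<open>(3,2) \<in> \<lambda>\<^sup>I\<close>.

  If \<open>I\<close> is shallow, then \<open>\<lambda>\<^sup>I = (s+1, s+1, 1, \<dots>, 1)\<close> and \<open>\<mu>\<^sup>I\<close> is a single row of length \<open>s\<close>.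
  Its excited diagrams slide a final segment of that row into the second row, so the unique
  diagram counted by \<open>C\<^sub>j\<close> has second-row hooks \<open>1, \<dots>, j\<close> and \<open>C\<^sub>j = j!\<close>.

  If \<open>I\<close> is deep, the excited diagrams keeping part of the first column of \<open>\<mu>\<^sup>I\<close> in place
  contribute enough to \<open>C\<^bsub>s-1\<^esub>\<close> to give \<open>C\<^sub>s < s C\<^bsub>s-1\<^esub>\<close>, i.e.
  \<open>C\<^sub>s / s! < C\<^bsub>s-1\<^esub> / (s-1)!\<close>.
\<close>

section \<open>Young diagrams\<close>

lemma young_eq_part: "young L = {(i, j). 1 \<le> i \<and> 1 \<le> j \<and> j \<le> part L i}"
  unfolding young_def part_def by (auto split: if_splits)

lemma young_cell_pos: "(i, j) \<in> young L \<Longrightarrow> 1 \<le> i \<and> 1 \<le> j"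
  unfolding young_def by auto

lemma finite_young: "finite (young L)"
proof (rule finite_subset)
  show "young L \<subseteq> {1..length L} \<times> {1..Max (set L)}"
    unfolding young_def by (auto intro!: order.trans[OF _ Max_ge])
qed simp

lemma row_young: "1 \<le> i \<Longrightarrow> {j. (i, j) \<in> young L} = {1..part L i}"
  unfolding young_eq_part by auto

lemma part_antimono:
  assumes "is_partition L" "1 \<le> i" "i \<le> i'"
  shows "part L i' \<le> part L i"
proof (cases "i' \<le> length L")
  case True
  have sorted: "sorted_wrt (\<ge>) L" using assms(1) unfolding is_partition_def by simp
  have "L ! (i' - 1) \<le> L ! (i - 1)"
  proof (cases "i = i'")
    case False
    then have "i - 1 < i' - 1" "i' - 1 < length L" using assms True by auto
    then show ?thesis using sorted by (simp add: sorted_wrt_iff_nth_less)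
  qed simp
  then show ?thesis using assms True unfolding part_def by auto
qed (auto simp: part_def)

lemma part_pos:
  assumes "is_partition L" "1 \<le> i" "i \<le> length L"
  shows "1 \<le> part L i"
proof -
  have "L ! (i - 1) \<in> set L" using assms by auto
  then have "L ! (i - 1) \<noteq> 0" using assms(1) unfolding is_partition_def by metis
  then show ?thesis using assms unfolding part_def by simp
qed

lemma young_downward_closed:
  assumes "is_partition L" "(i, j) \<in> young L" "1 \<le> i'" "i' \<le> i" "1 \<le> j'" "j' \<le> j"
  shows "(i', j') \<in> young L"
  using assms part_antimono[OF assms(1), of i' i] unfolding young_eq_part by auto

lemma first_column_young: "is_partition L \<Longrightarrow> {i. (i, 1) \<in> young L} = {1..length L}"
  using part_pos[of L] unfolding young_eq_part by (auto simp: part_def split: if_splits)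

lemma list_eq_if_part_eq:
  assumes "length A = length B" "\<And>i. part A i = part B i"
  shows "A = B"
proof (rule nth_equalityI)
  fix k assume "k < length A"
  then have "part A (Suc k) = A ! k" "part B (Suc k) = B ! k"
    using assms(1) unfolding part_def by auto
  then show "A ! k = B ! k" using assms(2) by metis
qed (fact assms(1))

lemma young_inject:
  assumes "is_partition A" "is_partition B" "young A = young B"
  shows "A = B"
proof (rule list_eq_if_part_eq)
  show "length A = length B"
    using first_column_young[OF assms(1)] first_column_young[OF assms(2)] assms(3)
    by (metis card_atLeastAtMost diff_Suc_1)
  show "part A i = part B i" for i
  proof (cases "1 \<le> i")
    case True
    have "card {j. (i, j) \<in> young A} = card {j. (i, j) \<in> young B}" using assms(3) by simp
    then show ?thesis unfolding row_young[OF True] by simp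
  qed (simp add: part_def)
qed

lemma outer_subset_young: "outer L \<subseteq> young L"
  unfolding outer_def by auto

lemma outer_eq:
  assumes "is_partition L"
  shows "outer L = {(i, j) \<in> young L. (i + 1, j + 1) \<notin> young L}"
proof -
  have "(i, j + 1) \<in> young L \<and> (i + 1, j) \<in> young L"
    if "(i, j) \<in> young L" "(i + 1, j + 1) \<in> young L" for i j
    using young_downward_closed[OF assms that(2)] young_cell_pos[OF that(1)] by auto
  then show ?thesis unfolding outer_def by blast
qed

lemma young_eq_left_of_outer:
  assumes "is_partition L"
  shows "young L = {(i, j). 1 \<le> j \<and> (\<exists>j'. j \<le> j' \<and> (i, j') \<in> outer L)}"
proof -
  have "(i, part L i) \<in> outer L" if "(i, j) \<in> young L" for i j
  proof -
    have "1 \<le> i" "1 \<le> j" "j \<le> part L i" using that unfolding young_eq_part by auto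
    moreover have "part L (i + 1) \<le> part L i"
      using part_antimono[OF assms, of i "i + 1"] \<open>1 \<le> i\<close> by simp
    ultimately show ?thesis unfolding outer_eq[OF assms] young_eq_part by auto
  qed
  moreover have "(i, j) \<in> young L" if "1 \<le> j" "j \<le> j'" "(i, j') \<in> outer L" for i j j'
  proof -
    have "(i, j') \<in> young L" using that(3) unfolding outer_def by auto
    then show ?thesis using young_downward_closed[OF assms, of i j' i j] young_cell_pos that by auto
  qed
  ultimately show ?thesis using young_cell_pos unfolding young_eq_part by auto
qed

lemma young_cell_bounds:
  assumes P: "is_partition L" and Y: "(i, j) \<in> young L"
  shows "1 \<le> i" "i \<le> length L" "1 \<le> j" "j \<le> part L 1"
proof -
  show "1 \<le> i" "1 \<le> j" "j \<le> part L 1"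
    using Y part_antimono[OF P, of 1 i] unfolding young_eq_part by auto
  show "i \<le> length L" using Y unfolding young_def by simp
qed

lemma finite_row_young: "finite {j. (i, j) \<in> young L \<and> P j}"
  by (rule finite_surj[OF finite_young, of _ snd]) force

lemma finite_column_young: "finite {i. (i, j) \<in> young L \<and> P i}"
  by (rule finite_surj[OF finite_young, of _ fst]) force

lemma down_closed_eq_atLeastAtMost_card:
  fixes S :: "nat set"
  assumes "finite S" "0 \<notin> S" "\<And>x y. x \<in> S \<Longrightarrow> 1 \<le> y \<Longrightarrow> y \<le> x \<Longrightarrow> y \<in> S"
  shows "S = {1..card S}"
proof (cases "S = {}")
  case False
  have "S = {1..Max S}"
  proof
    show "S \<subseteq> {1..Max S}"
    proof
      fix x assume "x \<in> S"
      moreover from this have "x \<noteq> 0" using assms(2) by metis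
      ultimately show "x \<in> {1..Max S}" using Max_ge[OF assms(1)] by auto
    qed
    show "{1..Max S} \<subseteq> S" using assms(3) Max_in[OF assms(1) False] by auto
  qed
  then show ?thesis by (metis card_atLeastAtMost diff_Suc_1)
qed simp

lemma column_young:
  assumes P: "is_partition L"
  shows "{i. (i, j) \<in> young L} = {1..conj_part L j}"
proof -
  have "finite {i. (i, j) \<in> young L}" using finite_column_young[of j L "\<lambda>_. True"] by simp
  then show ?thesis unfolding conj_part_def
    by (rule down_closed_eq_atLeastAtMost_card)
       (auto dest: young_cell_pos intro: young_downward_closed[OF P])
qed

lemma hook_pos:
  assumes "(i, j) \<in> young L"
  shows "0 < hook L (i, j)"
proof -
  have "j \<in> {j'. (i, j') \<in> young L \<and> j \<le> j'}" using assms by simp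
  then have "0 < card {j'. (i, j') \<in> young L \<and> j \<le> j'}"
    using finite_row_young card_gt_0_iff by blast
  then show ?thesis unfolding hook_def by simp
qed

lemma hook_slide_less:
  assumes P: "is_partition L" and ij: "1 \<le> i" "1 \<le> j" and Y: "(i + 1, j + 1) \<in> young L"
  shows "hook L (i + 1, j + 1) < hook L (i, j)"
proof -
  have "{j'. (i + 1, j') \<in> young L \<and> j + 1 \<le> j'} \<subset> {j'. (i, j') \<in> young L \<and> j \<le> j'}"
  proof
    show "{j'. (i + 1, j') \<in> young L \<and> j + 1 \<le> j'} \<subseteq> {j'. (i, j') \<in> young L \<and> j \<le> j'}"
      using young_downward_closed[OF P, of "i + 1" _ i] ij by auto
    have "(i, j) \<in> young L" using young_downward_closed[OF P Y, of i j] ij by auto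
    then have "j \<in> {j'. (i, j') \<in> young L \<and> j \<le> j'}" "j \<notin> {j'. (i + 1, j') \<in> young L \<and> j + 1 \<le> j'}"
      by auto
    then show "{j'. (i + 1, j') \<in> young L \<and> j + 1 \<le> j'} \<noteq> {j'. (i, j') \<in> young L \<and> j \<le> j'}"
      by blast
  qed
  then have "card {j'. (i + 1, j') \<in> young L \<and> j + 1 \<le> j'} < card {j'. (i, j') \<in> young L \<and> j \<le> j'}"
    by (rule psubset_card_mono[OF finite_row_young])
  moreover have "{i'. (i', j + 1) \<in> young L \<and> i + 1 < i'} \<subseteq> {i'. (i', j) \<in> young L \<and> i < i'}"
    using young_downward_closed[OF P, of _ "j + 1" _ j] ij by auto
  then have "card {i'. (i', j + 1) \<in> young L \<and> i + 1 < i'} \<le> card {i'. (i', j) \<in> young L \<and> i < i'}"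
    by (rule card_mono[OF finite_column_young])
  ultimately show ?thesis unfolding hook_def by simp
qed

section \<open>Ribbons and the shape of a descent set\<close>

definition ribbon_path :: "(nat \<Rightarrow> cell) \<Rightarrow> nat \<Rightarrow> nat set \<Rightarrow> bool" where
  "ribbon_path c n I \<longleftrightarrow> 1 \<le> n \<and> (\<forall>k\<in>{1..n}. 1 \<le> fst (c k) \<and> 1 \<le> snd (c k)) \<and>
     (\<forall>k\<in>{1..<n}. c (Suc k) = (fst (c k), snd (c k) + 1) \<or> c k = (fst (c (Suc k)) + 1, snd (c (Suc k)))) \<and>
     I = {k \<in> {1..<n}. c k = (fst (c (Suc k)) + 1, snd (c (Suc k)))}"

lemma ribbon_of_iff_path: "ribbon_of R I \<longleftrightarrow> (\<exists>n c. R = c ` {1..n} \<and> ribbon_path c n I)"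
  unfolding ribbon_of_def ribbon_path_def by blast

lemma ribbon_path_step:
  "ribbon_path c n I \<Longrightarrow> k \<in> {1..<n} \<Longrightarrow>
     c (Suc k) = (fst (c k), snd (c k) + 1) \<or> c k = (fst (c (Suc k)) + 1, snd (c (Suc k)))"
  unfolding ribbon_path_def by blast

lemma ribbon_path_descents:
  "ribbon_path c n I \<Longrightarrow> I = {k \<in> {1..<n}. c k = (fst (c (Suc k)) + 1, snd (c (Suc k)))}"
  unfolding ribbon_path_def by blast

lemma ribbon_path_monotone:
  assumes "ribbon_path c n I" "1 \<le> k" "k \<le> k'" "k' \<le> n"
  shows "fst (c k') \<le> fst (c k) \<and> snd (c k) \<le> snd (c k')"
  using assms(3,4)
proof (induction k' rule: dec_induct)
  case (step m)
  then have "m \<in> {1..<n}" using assms(2) by auto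
  then have "c (Suc m) = (fst (c m), snd (c m) + 1) \<or> c m = (fst (c (Suc m)) + 1, snd (c (Suc m)))"
    by (rule ribbon_path_step[OF assms(1)])
  then show ?case using step by auto
qed simp

lemma ribbon_path_cell:
  assumes path: "ribbon_path c n I" and "1 \<le> k" "k \<le> n"
  shows "c k = (fst (c 1) - card (I \<inter> {1..<k}), snd (c 1) + card ({1..<k} - I))"
  using assms(2,3)
proof (induction k rule: dec_induct)
  case (step m)
  then have m: "m \<in> {1..<n}" using assms(2) by auto
  note I = ribbon_path_descents[OF path]
  show ?case
  proof (cases "m \<in> I")
    case True
    then have cm: "c m = (fst (c (Suc m)) + 1, snd (c (Suc m)))" using I by auto
    have "I \<inter> {1..<Suc m} = insert m (I \<inter> {1..<m})" using True step(1) by auto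
    then have "card (I \<inter> {1..<Suc m}) = Suc (card (I \<inter> {1..<m}))" by simp
    moreover have "{1..<Suc m} - I = {1..<m} - I" using True by (auto simp: less_Suc_eq)
    ultimately show ?thesis using step cm by (cases "c (Suc m)") auto
  next
    case False
    then have "c m \<noteq> (fst (c (Suc m)) + 1, snd (c (Suc m)))" using I m by auto
    then have cm: "c (Suc m) = (fst (c m), snd (c m) + 1)"
      using ribbon_path_step[OF path m] by blast
    have "{1..<Suc m} - I = insert m ({1..<m} - I)" using False step(1) by auto
    then have "card ({1..<Suc m} - I) = Suc (card ({1..<m} - I))" by simp
    moreover have "I \<inter> {1..<Suc m} = I \<inter> {1..<m}" using False by (auto simp: less_Suc_eq)
    ultimately show ?thesis using step cm by simp
  qed
qed simp

lemma image_prepend_atLeastAtMost: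
  "(\<lambda>k. if k = 1 then x else c (k - 1)) ` {1..n + 1} = insert x (c ` {1..n::nat})"
proof -
  let ?f = "\<lambda>k. if k = 1 then x else c (k - 1)"
  have "{1..n + 1} = insert 1 (Suc ` {1..n})"
    by (auto simp: image_iff intro: bexI[of _ "_ - 1"])
  then have "?f ` {1..n + 1} = insert (?f 1) ((?f \<circ> Suc) ` {1..n})"
    by (simp only: image_insert image_comp)
  also have "(?f \<circ> Suc) ` {1..n} = c ` {1..n}" by (rule image_cong) auto
  finally show ?thesis by simp
qed

lemma ribbon_path_prepend:
  assumes path: "ribbon_path c n I" and x: "1 \<le> fst x" "1 \<le> snd x"
    and adj: "c 1 = (fst x, snd x + 1) \<or> x = (fst (c 1) + 1, snd (c 1))"
  shows "ribbon_path (\<lambda>k. if k = 1 then x else c (k - 1)) (n + 1)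
           ((if x = (fst (c 1) + 1, snd (c 1)) then {1} else {}) \<union> Suc ` I)"
    (is "ribbon_path ?c _ ?I")
proof -
  note I = ribbon_path_descents[OF path]
  have n: "1 \<le> n" using path unfolding ribbon_path_def by simp
  have pos: "1 \<le> fst (?c k) \<and> 1 \<le> snd (?c k)" if "k \<in> {1..n + 1}" for k
  proof (cases "k = 1")
    case False
    then have "k - 1 \<in> {1..n}" using that by auto
    then show ?thesis using path False unfolding ribbon_path_def by auto
  qed (use x in auto)
  have steps: "?c (Suc k) = (fst (?c k), snd (?c k) + 1) \<or> ?c k = (fst (?c (Suc k)) + 1, snd (?c (Suc k)))"
    if "k \<in> {1..<n + 1}" for k
  proof (cases "k = 1")
    case False
    then have "k - 1 \<in> {1..<n}" "Suc (k - 1) = k" using that by auto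
    then show ?thesis using ribbon_path_step[OF path, of "k - 1"] False by auto
  qed (use adj in auto)
  have "k \<in> ?I \<longleftrightarrow> k \<in> {1..<n + 1} \<and> ?c k = (fst (?c (Suc k)) + 1, snd (?c (Suc k)))" for k
  proof (cases "k \<le> 1")
    case True
    have "0 \<notin> I" using I by auto
    then show ?thesis using True n by (cases k) auto
  next
    case False
    then have "k \<in> Suc ` I \<longleftrightarrow> k - 1 \<in> I" by (auto simp: image_iff intro: bexI[of _ "k - 1"])
    moreover have "Suc (k - 1) = k" using False by simp
    ultimately show ?thesis using False I by auto
  qed
  then have "?I = {k \<in> {1..<n + 1}. ?c k = (fst (?c (Suc k)) + 1, snd (?c (Suc k)))}" by blast
  then show ?thesis unfolding ribbon_path_def using pos steps by auto
qed

lemma ribbon_path_shift_right: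
  "ribbon_path c n I \<Longrightarrow> ribbon_path (\<lambda>k. (fst (c k), snd (c k) + 1)) n I"
  unfolding ribbon_path_def by (auto simp: prod_eq_iff)

definition ribbon_partition :: "nat list \<Rightarrow> nat set \<Rightarrow> bool" where
  "ribbon_partition L I \<longleftrightarrow> is_partition L \<and> part L 1 = part L 2 \<and> ribbon_of (outer L) I"

lemma ribbon_partition_shape:
  assumes "ribbon_partition L I"
  shows "1 \<le> part L 1" "2 \<le> length L"
proof -
  obtain n c where "outer L = c ` {1..n}" "ribbon_path c n I"
    using assms unfolding ribbon_partition_def ribbon_of_iff_path by blast
  then have "c 1 \<in> young L" using outer_subset_young unfolding ribbon_path_def by fastforce
  then have "1 \<le> length L" unfolding young_def by auto
  moreover have P: "is_partition L" using assms unfolding ribbon_partition_def by simp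
  ultimately show "1 \<le> part L 1" using part_pos[OF P order.refl] by simp
  then show "2 \<le> length L" using assms unfolding ribbon_partition_def part_def by (auto split: if_splits)
qed

lemma outer_corners:
  assumes P: "is_partition L" and P12: "part L 1 = part L 2" and p1: "1 \<le> part L 1"
  shows "(length L, 1) \<in> outer L" "(1, part L 1) \<in> outer L" "(2, part L 1) \<in> outer L"
proof -
  have "2 \<le> length L" using p1 P12 unfolding part_def by (auto split: if_splits)
  then have "(length L, 1) \<in> young L" using first_column_young[OF P] by auto
  moreover have "length L + 1 \<notin> {i. (i, 1) \<in> young L}" unfolding first_column_young[OF P] by simp
  then have "(length L + 1, 2) \<notin> young L"
    using young_downward_closed[OF P, of "length L + 1" 2 "length L + 1" 1] by auto
  ultimately show "(length L, 1) \<in> outer L" unfolding outer_eq[OF P] by (simp add: numeral_2_eq_2)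
  show "(1, part L 1) \<in> outer L" unfolding outer_eq[OF P] young_eq_part using p1 P12
    by (auto simp: numeral_2_eq_2)
  have "part L 3 \<le> part L 2" using part_antimono[OF P, of 2 3] by auto
  then show "(2, part L 1) \<in> outer L" unfolding outer_eq[OF P] young_eq_part using p1 P12
    by (auto simp: numeral_2_eq_2 numeral_3_eq_3)
qed

text \<open>A path through the rim is monotone, so it runs between the extreme cells of
  \<open>outer_corners\<close>.\<close>

lemma ribbon_partition_path_ends:
  assumes rp: "ribbon_partition L I" and R: "outer L = c ` {1..n}" and path: "ribbon_path c n I"
  shows "c 1 = (length L, 1)" "c n = (1, part L 1)" "c (n - 1) = (2, part L 1)" "2 \<le> n"
proof -
  have P: "is_partition L" and P12: "part L 1 = part L 2" using rp unfolding ribbon_partition_def by auto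
  have n: "1 \<le> n" using path unfolding ribbon_path_def by simp
  have p1: "1 \<le> part L 1" and l2: "2 \<le> length L" using ribbon_partition_shape[OF rp] by auto
  note corners = outer_corners[OF P P12 p1]
  have bounds: "1 \<le> fst (c k) \<and> fst (c k) \<le> length L \<and> 1 \<le> snd (c k) \<and> snd (c k) \<le> part L 1"
    if "k \<in> {1..n}" for k
  proof -
    have "c k \<in> young L" using that R outer_subset_young by blast
    then have "(fst (c k), snd (c k)) \<in> young L" by simp
    then show ?thesis using young_cell_bounds[OF P] by blast
  qed
  obtain k0 where k0: "k0 \<in> {1..n}" "c k0 = (length L, 1)" using corners(1) R by auto
  then have "fst (c k0) \<le> fst (c 1) \<and> snd (c 1) \<le> snd (c k0)"
    using ribbon_path_monotone[OF path, of 1 k0] by auto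
  then show c1: "c 1 = (length L, 1)" using bounds[of 1] k0 n by (cases "c 1") auto
  obtain k1 where k1: "k1 \<in> {1..n}" "c k1 = (1, part L 1)" using corners(2) R by auto
  then have "fst (c n) \<le> fst (c k1) \<and> snd (c k1) \<le> snd (c n)"
    using ribbon_path_monotone[OF path, of k1 n] by auto
  then show cn: "c n = (1, part L 1)" using bounds[of n] k1 n by (cases "c n") auto
  show n2: "2 \<le> n"
  proof (rule ccontr)
    assume "\<not> 2 \<le> n"
    then have "n = 1" using n by simp
    then show False using c1 cn l2 by simp
  qed
  obtain k2 where k2: "k2 \<in> {1..n}" "c k2 = (2, part L 1)" using corners(3) R by auto
  then have "k2 \<le> n - 1" using cn by (cases "k2 = n") auto
  then have "part L 1 \<le> snd (c (n - 1))"
    using ribbon_path_monotone[OF path, of k2 "n - 1"] k2 n2 by auto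
  moreover have "n - 1 \<in> {1..<n}" "Suc (n - 1) = n" using n2 by auto
  ultimately show "c (n - 1) = (2, part L 1)"
    using ribbon_path_step[OF path, of "n - 1"] cn by auto
qed

text \<open>The ribbon of \<open>I\<close> starts at \<open>(card I + 1, 1)\<close>; each descent before step \<open>k\<close> moves one
  row up, each other step one column right.\<close>

definition ribbon_cell :: "nat set \<Rightarrow> nat \<Rightarrow> cell" where
  "ribbon_cell I k = (card I + 1 - card (I \<inter> {1..<k}), 1 + card ({1..<k} - I))"

lemma outer_eq_ribbon_cells:
  assumes rp: "ribbon_partition L I"
  shows "outer L = ribbon_cell I ` {1..Max I + 1}"
proof -
  obtain n c where R: "outer L = c ` {1..n}" and path: "ribbon_path c n I"
    using rp unfolding ribbon_partition_def ribbon_of_iff_path by blast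
  note ends = ribbon_partition_path_ends[OF rp R path]
  note I = ribbon_path_descents[OF path]
  have "n - 1 \<in> I" using ends(2-4) I by (auto simp: Suc_diff_1)
  moreover have Isub: "I \<subseteq> {1..<n}" using I by auto
  ultimately have "Max I = n - 1"
    using finite_subset[OF Isub] by (intro Max_eqI) (auto simp: subset_iff)
  then have n: "{1..n} = {1..Max I + 1}" using ends(4) by auto
  have "c n = (length L - card I, 1 + card ({1..<n} - I))"
    using ribbon_path_cell[OF path, of n] ends(1,4) Isub by (simp add: Int_absorb2)
  then have "length L = card I + 1" using ends(2) by auto
  then have "c k = ribbon_cell I k" if "k \<in> {1..n}" for k
    using ribbon_path_cell[OF path, of k] that ends(1) unfolding ribbon_cell_def by auto
  then show ?thesis unfolding R n[symmetric] by (rule image_cong[OF refl])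
qed

lemma ribbon_partition_unique:
  assumes "ribbon_partition A I" "ribbon_partition B I"
  shows "A = B"
proof (rule young_inject)
  show "is_partition A" "is_partition B" using assms unfolding ribbon_partition_def by auto
  then show "young A = young B"
    using outer_eq_ribbon_cells[OF assms(1)] outer_eq_ribbon_cells[OF assms(2)]
    by (simp add: young_eq_left_of_outer)
qed

lemma ribbon_partition_base: "ribbon_partition [1, 1] {1}"
proof -
  define L :: "nat list" where "L = [1, 1]"
  define c :: "nat \<Rightarrow> cell" where "c = (\<lambda>k. if k = 1 then (2, 1) else (1, 1))"
  have P: "is_partition L" unfolding L_def is_partition_def by auto
  have two: "{1..2::nat} = {1, 2}" "{1..<2::nat} = {1}" by auto
  have "young L = {(1, 1), (2, 1)}" unfolding young_eq_part L_def part_def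
    by (auto simp: numeral_2_eq_2 le_Suc_eq split: if_splits)
  then have "outer L = c ` {1..2}"
    unfolding outer_eq[OF P] c_def two by (auto simp: numeral_2_eq_2)
  moreover have "ribbon_path c 2 {1}"
    unfolding ribbon_path_def c_def two by (auto simp: numeral_2_eq_2)
  moreover have "part L 1 = part L 2" unfolding L_def part_def by auto
  ultimately show ?thesis using P unfolding ribbon_partition_def ribbon_of_iff_path L_def by blast
qed

lemma part_append_one: "part (L @ [1]) i = (if i = length L + 1 then 1 else part L i)"
  unfolding part_def by (auto simp: nth_append)

lemma part_map_Suc: "part (map Suc L) i = (if 1 \<le> i \<and> i \<le> length L then Suc (part L i) else 0)"
  unfolding part_def by auto

lemma is_partition_append_one:
  assumes "is_partition L"
  shows "is_partition (L @ [1])"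
proof -
  have "\<forall>x\<in>set L. 1 \<le> x" using assms unfolding is_partition_def by (metis less_one not_le)
  then show ?thesis using assms unfolding is_partition_def by (auto simp: sorted_wrt_append)
qed

lemma is_partition_map_Suc: "is_partition L \<Longrightarrow> is_partition (map Suc L)"
  unfolding is_partition_def by (auto simp: sorted_wrt_map)

lemma outer_append_one:
  assumes P: "is_partition L"
  shows "outer (L @ [1]) = insert (length L + 1, 1) (outer L)"
proof -
  have Y: "young (L @ [1]) = insert (length L + 1, 1) (young L)"
    unfolding young_eq_part part_append_one by (auto simp: part_def split: if_splits)
  have "(length L + 2, 2) \<notin> young L" unfolding young_eq_part part_def by auto
  then show ?thesis
    unfolding outer_eq[OF is_partition_append_one[OF P]] outer_eq[OF P] Y
    by (auto simp: numeral_2_eq_2 dest: young_cell_pos)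
qed

lemma outer_map_Suc:
  assumes P: "is_partition L" and L: "2 \<le> length L"
  shows "outer (map Suc L) = insert (length L, 1) ((\<lambda>(i, j). (i, j + 1)) ` outer L)"
proof (rule set_eqI)
  fix x :: cell
  obtain i j where x: "x = (i, j)" by fastforce
  define l where "l = length L"
  have part_Suc: "part (map Suc L) i = (if 1 \<le> i \<and> i \<le> l then Suc (part L i) else 0)" for i
    unfolding l_def by (rule part_map_Suc)
  have beyond: "part L i = 0" if "l < i" for i using that unfolding part_def l_def by auto
  have not_first: "(i, 0) \<notin> outer L" using outer_subset_young[of L] young_cell_pos[of i 0 L] by auto
  show "x \<in> outer (map Suc L) \<longleftrightarrow> x \<in> insert (length L, 1) ((\<lambda>(i, j). (i, j + 1)) ` outer L)"
  proof (cases "j = 1")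
    case True
    have "(i, 1) \<in> outer (map Suc L) \<longleftrightarrow> i = l"
      unfolding outer_eq[OF is_partition_map_Suc[OF P]] young_eq_part part_Suc
      using part_pos[OF P, of "i + 1"] L unfolding l_def by auto
    then show ?thesis using x True not_first unfolding l_def by auto
  next
    case False
    then have "(i, j) \<in> (\<lambda>(i, j). (i, j + 1)) ` outer L \<longleftrightarrow> (i, j - 1) \<in> outer L"
      using not_first by (cases j) (force simp: image_iff)+
    moreover have "(i, j) \<in> outer (map Suc L) \<longleftrightarrow> (i, j - 1) \<in> outer L"
      unfolding outer_eq[OF is_partition_map_Suc[OF P]] outer_eq[OF P] young_eq_part part_Suc
      using False beyond[of i] beyond[of "i + 1"] by (auto simp: not_le)
    ultimately show ?thesis using x False unfolding l_def by auto
  qed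
qed

lemma ribbon_partition_append_row:
  assumes rp: "ribbon_partition L I"
  shows "ribbon_partition (L @ [1]) (insert 1 (Suc ` I))"
proof -
  have P: "is_partition L" and P12: "part L 1 = part L 2" using rp unfolding ribbon_partition_def by auto
  obtain n c where R: "outer L = c ` {1..n}" and path: "ribbon_path c n I"
    using rp unfolding ribbon_partition_def ribbon_of_iff_path by blast
  have c1: "c 1 = (length L, 1)" by (rule ribbon_partition_path_ends(1)[OF rp R path])
  have L2: "2 \<le> length L" by (rule ribbon_partition_shape(2)[OF rp])
  let ?c = "\<lambda>k. if k = 1 then (length L + 1, 1) else c (k - 1)"
  have "ribbon_path ?c (n + 1) (insert 1 (Suc ` I))"
    using ribbon_path_prepend[OF path, of "(length L + 1, 1)"] c1 by simp
  moreover have "outer (L @ [1]) = ?c ` {1..n + 1}"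
    unfolding outer_append_one[OF P] image_prepend_atLeastAtMost R ..
  moreover have "part (L @ [1]) 1 = part (L @ [1]) 2"
    using P12 L2 unfolding part_append_one by auto
  ultimately show ?thesis
    using is_partition_append_one[OF P] unfolding ribbon_partition_def ribbon_of_iff_path by blast
qed

lemma ribbon_partition_map_Suc:
  assumes rp: "ribbon_partition L I"
  shows "ribbon_partition (map Suc L) (Suc ` I)"
proof -
  have P: "is_partition L" and P12: "part L 1 = part L 2" using rp unfolding ribbon_partition_def by auto
  obtain n c where R: "outer L = c ` {1..n}" and path: "ribbon_path c n I"
    using rp unfolding ribbon_partition_def ribbon_of_iff_path by blast
  have c1: "c 1 = (length L, 1)" by (rule ribbon_partition_path_ends(1)[OF rp R path])
  have L2: "2 \<le> length L" by (rule ribbon_partition_shape(2)[OF rp])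
  let ?r = "\<lambda>k. (fst (c k), snd (c k) + 1)"
  let ?c = "\<lambda>k. if k = 1 then (length L, 1) else ?r (k - 1)"
  have "ribbon_path ?c (n + 1) (Suc ` I)"
    using ribbon_path_prepend[OF ribbon_path_shift_right[OF path], of "(length L, 1)"] c1 L2 by simp
  moreover have "outer (map Suc L) = ?c ` {1..n + 1}"
  proof -
    have "?c ` {1..n + 1} = insert (length L, 1) (?r ` {1..n})"
      by (rule image_prepend_atLeastAtMost)
    then show ?thesis unfolding outer_map_Suc[OF P L2] R image_image by (simp add: case_prod_beta)
  qed
  moreover have "part (map Suc L) 1 = part (map Suc L) 2"
    using P12 L2 unfolding part_map_Suc by auto
  ultimately show ?thesis
    using is_partition_map_Suc[OF P] unfolding ribbon_partition_def ribbon_of_iff_path by blast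
qed

lemma descent_set_remove_first:
  assumes "descent_set I" "I \<noteq> {1}"
  obtains I' where "descent_set I'" "Max I' < Max I" "I - {1} = Suc ` I'"
proof
  have fin: "finite I" and ne: "I \<noteq> {}" and pos: "\<forall>i\<in>I. 0 < i"
    using assms(1) unfolding descent_set_def by auto
  define I' where "I' = (\<lambda>k. k - 1) ` (I - {1})"
  show shift: "I - {1} = Suc ` I'"
    unfolding I'_def image_image using pos by (force simp: image_iff)
  have "I - {1} \<noteq> {}" using assms(2) ne by auto
  moreover have "finite I'" unfolding I'_def using fin by simp
  moreover have "0 \<notin> I'"
  proof
    assume "0 \<in> I'"
    then have "Suc 0 \<in> I - {1}" unfolding shift by blast
    then show False by simp
  qed
  ultimately show desc: "descent_set I'" unfolding descent_set_def shift by auto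
  have "Max I' \<in> I'" using desc unfolding descent_set_def by simp
  then have "Suc (Max I') \<in> I" using shift by blast
  then show "Max I' < Max I" using Max_ge[OF fin] by fastforce
qed

text \<open>Induction on the largest descent: removing the first cell of the ribbon either deletes
  a last row of length one (if \<open>1 \<in> I\<close>) or the first column.\<close>

lemma ribbon_partition_exists:
  assumes "descent_set I"
  shows "\<exists>L. ribbon_partition L I"
  using assms
proof (induction "Max I" arbitrary: I rule: less_induct)
  case less
  show ?case
  proof (cases "I = {1}")
    case True
    then show ?thesis using ribbon_partition_base by blast
  next
    case False
    obtain I' where I': "descent_set I'" "Max I' < Max I" and shift: "I - {1} = Suc ` I'"
      using descent_set_remove_first[OF less.prems False] by blast
    obtain L' where L': "ribbon_partition L' I'" using less.hyps[OF I'(2,1)] by blast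
    show ?thesis
    proof (cases "1 \<in> I")
      case True
      then have "I = insert 1 (Suc ` I')" using shift by blast
      then show ?thesis using ribbon_partition_append_row[OF L'] by auto
    next
      case False
      then have "I = Suc ` I'" using shift by simp
      then show ?thesis using ribbon_partition_map_Suc[OF L'] by auto
    qed
  qed
qed

lemma ribbon_partition_lamI:
  assumes "descent_set I"
  shows "ribbon_partition (lamI I) I"
proof -
  have "\<exists>!L. ribbon_partition L I"
    using ribbon_partition_exists[OF assms] ribbon_partition_unique by blast
  then show ?thesis unfolding lamI_def ribbon_partition_def[symmetric] by (rule theI')
qed

section \<open>Excited diagrams\<close>

definition inner :: "nat list \<Rightarrow> cell set" where
  "inner L = {(i, j). 1 \<le> i \<and> 1 \<le> j \<and> (i + 1, j + 1) \<in> young L}"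

lemma Pair_zero_notin_inner [simp]: "(0, j) \<notin> inner L" "(i, 0) \<notin> inner L"
  unfolding inner_def by auto

lemma finite_inner: "finite (inner L)"
proof (rule finite_surj[OF finite_young])
  show "inner L \<subseteq> (\<lambda>(i, j). (i - 1, j - 1)) ` young L"
    unfolding inner_def by (force simp: image_iff)
qed

lemma young_minus_outer:
  assumes "is_partition L"
  shows "young L - outer L = inner L"
  unfolding outer_eq[OF assms] inner_def
  using young_downward_closed[OF assms, of "_ + 1" "_ + 1"] young_cell_pos by force

lemma part_takeWhile_tl:
  assumes P: "is_partition L" and i: "1 \<le> i"
  shows "part (map (\<lambda>x. x - 1) (takeWhile (\<lambda>x. 2 \<le> x) (tl L))) i = part L (i + 1) - 1"
proof -
  define tw where "tw = takeWhile (\<lambda>x. 2 \<le> x) (tl L)"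
  have tl_nth: "tl L ! k = L ! (k + 1)" if "k < length (tl L)" for k
    using that by (cases L) auto
  have tw_len: "length tw \<le> length (tl L)" unfolding tw_def by (rule length_takeWhile_le)
  show ?thesis
  proof (cases "i \<le> length tw")
    case True
    then have "part (map (\<lambda>x. x - 1) tw) i = tl L ! (i - 1) - 1" "tl L ! (i - 1) = L ! i"
      "i + 1 \<le> length L"
      using i tw_len tl_nth[of "i - 1"] unfolding part_def tw_def by (auto simp: takeWhile_nth)
    then show ?thesis unfolding part_def tw_def using i by auto
  next
    case False
    have "part L (i + 1) \<le> 1"
    proof (cases "length tw < length (tl L)")
      case True
      have "\<not> 2 \<le> tl L ! length tw"
        using nth_length_takeWhile[of "\<lambda>x. 2 \<le> x" "tl L"] True unfolding tw_def by auto
      then have "part L (length tw + 2) \<le> 1" using tl_nth[of "length tw"] True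
        unfolding part_def by auto
      moreover have "part L (i + 1) \<le> part L (length tw + 2)"
        using part_antimono[OF P, of "length tw + 2" "i + 1"] False by auto
      ultimately show ?thesis by auto
    next
      case False
      then have "length L < i + 1" using \<open>\<not> i \<le> length tw\<close> tw_len by auto
      then show ?thesis unfolding part_def by auto
    qed
    then show ?thesis using False unfolding part_def tw_def by auto
  qed
qed

lemma inner_partition_exists:
  assumes P: "is_partition L"
  shows "\<exists>mu. is_partition mu \<and> young mu = inner L"
proof (intro exI conjI)
  let ?tw = "takeWhile (\<lambda>x. 2 \<le> x) (tl L)"
  have "sorted_wrt (\<ge>) (tl L)" using P unfolding is_partition_def by (cases L) auto
  then have "sorted_wrt (\<ge>) ?tw" by simp
  then have "sorted_wrt (\<lambda>x y. y - 1 \<le> x - (1::nat)) ?tw"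
    by (rule sorted_wrt_mono_rel[rotated]) (simp add: diff_le_mono)
  then show "is_partition (map (\<lambda>x. x - 1) ?tw)"
    unfolding is_partition_def by (auto simp: sorted_wrt_map dest: set_takeWhileD)
  show "young (map (\<lambda>x. x - 1) ?tw) = inner L"
    unfolding inner_def young_eq_part using part_takeWhile_tl[OF P] by auto
qed

lemma muI_inner:
  assumes "descent_set I"
  shows "is_partition (muI I)" "young (muI I) = inner (lamI I)"
proof -
  define L where "L = lamI I"
  have P: "is_partition L" using ribbon_partition_lamI[OF assms] unfolding ribbon_partition_def L_def by simp
  have char: "young mu \<subseteq> young L \<and> young L - young mu = outer L \<longleftrightarrow> young mu = inner L" for mu
    using young_minus_outer[OF P] outer_subset_young[of L] by blast
  obtain mu where mu: "is_partition mu" "young mu = inner L" using inner_partition_exists[OF P] by blast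
  have "\<exists>!mu. is_partition mu \<and> young mu \<subseteq> young L \<and> young L - young mu = outer L"
    unfolding char using mu young_inject by (metis)
  then have "is_partition (muI I) \<and> young (muI I) \<subseteq> young L \<and> young L - young (muI I) = outer L"
    unfolding muI_def L_def by (rule theI')
  then show "is_partition (muI I)" "young (muI I) = inner (lamI I)" using char L_def by auto
qed

lemma excited_subset_young: "D \<in> excited L mu \<Longrightarrow> young mu \<subseteq> young L \<Longrightarrow> D \<subseteq> young L"
  by (induction rule: excited.induct) auto

lemma finite_excited: "young mu \<subseteq> young L \<Longrightarrow> finite (excited L mu)"
  using excited_subset_young finite_young by (metis Pow_iff finite_Pow_iff finite_subset subsetI)

lemma card_excited:
  assumes "D \<in> excited L mu"
  shows "card D = card (young mu)"
proof -
  have "finite D \<and> card D = card (young mu)"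
    using assms
  proof (induction rule: excited.induct)
    case (step D i j)
    then have "card (D - {(i, j)}) = card D - 1" "card D > 0" by (auto simp: card_gt_0_iff finite_young)
    then show ?case using step by (simp add: finite_young)
  qed (simp add: finite_young)
  then show ?thesis ..
qed

lemma excited_first_column_closed:
  assumes "D \<in> excited L mu" "is_partition mu" "young mu \<subseteq> young L"
    and "1 \<le> i" "(i + 1, 1) \<in> D"
  shows "(i, 1) \<in> D"
  using assms(1,4,5)
proof (induction arbitrary: i rule: excited.induct)
  case base
  then show ?case using young_downward_closed[OF assms(2)] by fastforce
next
  case (step D a b)
  have "1 \<le> b" using excited_subset_young[OF step.hyps(1) assms(3)] step.hyps(2) young_cell_pos by blast
  then have "(i + 1, 1) \<in> D" using step.prems by auto
  then have "(i, 1) \<in> D" using step.IH step.prems(1) by blast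
  moreover have "(i, 1) \<noteq> (a, b)" using step.hyps(5) \<open>(i + 1, 1) \<in> D\<close> by auto
  ultimately show ?case by auto
qed

definition slide :: "cell \<Rightarrow> cell" where
  "slide c = (fst c + 1, snd c + 1)"

lemma slide_Pair [simp]: "slide (i, j) = (i + 1, j + 1)"
  unfolding slide_def by simp

lemma inj_slide: "inj slide"
  unfolding slide_def by (auto intro: injI simp: prod_eq_iff)

lemma Pair_in_slide_image: "(a, b) \<in> slide ` X \<longleftrightarrow> 0 < a \<and> 0 < b \<and> (a - 1, b - 1) \<in> X"
  by (force simp: image_iff slide_def)

lemma excited_slide_least_cell:
  assumes S: "(inner L - Q) \<union> slide ` Q \<in> excited L mu"
    and c: "(i, j) \<in> inner L" "(i, j) \<notin> Q" and least: "\<And>d. d \<in> Q \<Longrightarrow> (i, j) < d"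
    and closed: "\<And>d. d \<in> {(i, j + 1), (i + 1, j), (i + 1, j + 1)} \<Longrightarrow> d \<in> inner L \<Longrightarrow> d \<in> Q"
  shows "(inner L - insert (i, j) Q) \<union> slide ` insert (i, j) Q \<in> excited L mu"
proof -
  have ij: "(i + 1, j + 1) \<in> young L" using c(1) unfolding inner_def by simp
  have not_slid: "d \<notin> slide ` Q" if "d \<in> {(i, j), (i, j + 1), (i + 1, j), (i + 1, j + 1)}" for d
  proof
    assume "d \<in> slide ` Q"
    then obtain a b where "(a, b) \<in> Q" "d = (a + 1, b + 1)" by auto
    then show False using least[of "(a, b)"] that by auto
  qed
  have vacant: "d \<notin> (inner L - Q) \<union> slide ` Q" if "d \<in> {(i, j + 1), (i + 1, j), (i + 1, j + 1)}" for d
  proof -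
    have "d \<notin> slide ` Q" using not_slid that by blast
    moreover have "d \<notin> inner L - Q" using closed[OF that] by blast
    ultimately show ?thesis by blast
  qed
  have "insert (i + 1, j + 1) ((inner L - Q) \<union> slide ` Q - {(i, j)}) \<in> excited L mu"
  proof (rule excited.step[OF S _ ij])
    show "(i, j) \<in> (inner L - Q) \<union> slide ` Q" using c by blast
  qed (rule vacant; simp)+
  moreover have "(i, j) \<notin> slide ` Q" using not_slid by blast
  then have "insert (i + 1, j + 1) ((inner L - Q) \<union> slide ` Q - {(i, j)}) =
      (inner L - insert (i, j) Q) \<union> slide ` insert (i, j) Q"
    by auto
  ultimately show ?thesis by simp
qed

text \<open>The cells of \<open>Q\<close> are slid in decreasing lexicographic order: the least one goes last,
  when its three target cells are vacant.\<close>

lemma excited_slide_closed: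
  assumes mu: "young mu = inner L" and Q: "Q \<subseteq> inner L"
    and closed: "\<And>i j d. (i, j) \<in> Q \<Longrightarrow> d \<in> {(i, j + 1), (i + 1, j), (i + 1, j + 1)} \<Longrightarrow>
                   d \<in> inner L \<Longrightarrow> d \<in> Q"
  shows "(inner L - Q) \<union> slide ` Q \<in> excited L mu"
  using finite_subset[OF Q finite_inner] Q closed
proof (induction Q rule: finite_psubset_induct)
  case (psubset Q)
  show ?case
  proof (cases "Q = {}")
    case True
    then show ?thesis using excited.base[of mu L] mu by simp
  next
    case False
    obtain i j where c: "Min Q = (i, j)" by fastforce
    have cQ: "(i, j) \<in> Q" using psubset.hyps False c[symmetric] by simp
    define Q' where "Q' = Q - {(i, j)}"
    have Q_eq: "Q = insert (i, j) Q'" using cQ unfolding Q'_def by blast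
    have least: "(i, j) < d" if "d \<in> Q'" for d
    proof -
      have "Min Q \<le> d" using psubset.hyps that unfolding Q'_def by simp
      moreover have "d \<noteq> (i, j)" using that unfolding Q'_def by simp
      ultimately show ?thesis using c by (simp add: order.strict_iff_order)
    qed
    have closed_c: "d \<in> Q'" if "d \<in> {(i, j + 1), (i + 1, j), (i + 1, j + 1)}" "d \<in> inner L" for d
      using psubset.prems(2)[OF cQ that] that unfolding Q'_def by auto
    have closed': "d \<in> Q'" if "(i', j') \<in> Q'" "d \<in> {(i', j' + 1), (i' + 1, j'), (i' + 1, j' + 1)}"
      "d \<in> inner L" for i' j' d
    proof -
      have "d \<in> Q" using psubset.prems(2) that Q'_def by blast
      moreover have "(i, j) < (i', j')" using least that(1) by blast
      then have "d \<noteq> (i, j)" using that(2) by auto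
      ultimately show ?thesis unfolding Q'_def by blast
    qed
    have "Q' \<subset> Q" "Q' \<subseteq> inner L" using cQ psubset.prems(1) unfolding Q'_def by auto
    then have "(inner L - Q') \<union> slide ` Q' \<in> excited L mu"
      using psubset.IH closed' by blast
    moreover have "(i, j) \<in> inner L" "(i, j) \<notin> Q'" using cQ psubset.prems(1) unfolding Q'_def by auto
    ultimately show ?thesis unfolding Q_eq by (rule excited_slide_least_cell[OF _ _ _ least closed_c])
  qed
qed

definition excited_weight :: "nat list \<Rightarrow> cell set \<Rightarrow> nat" where
  "excited_weight L D = (\<Prod>c \<in> {c \<in> D. fst c \<noteq> 1}. hook L c)"

definition nn_coeff :: "nat list \<Rightarrow> nat list \<Rightarrow> nat \<Rightarrow> nat \<Rightarrow> nat" where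
  "nn_coeff L mu s j = (\<Sum>D \<in> {D \<in> excited L mu. card {c \<in> D. fst c = 1} = s - j}. excited_weight L D)"

lemma NN_coeff_eq_nn_coeff: "NN_coeff I j = nn_coeff (lamI I) (muI I) (sI I) j"
  unfolding NN_coeff_def nn_coeff_def excited_weight_def ..

lemma excited_weight_insert:
  assumes "finite D" "c \<notin> D"
  shows "excited_weight L (insert c D) = (if fst c = 1 then 1 else hook L c) * excited_weight L D"
proof -
  have "{x \<in> insert c D. fst x \<noteq> 1} =
      (if fst c = 1 then {x \<in> D. fst x \<noteq> 1} else insert c {x \<in> D. fst x \<noteq> 1})" by auto
  then show ?thesis unfolding excited_weight_def using assms by simp
qed

lemma excited_weight_pos:
  assumes "D \<subseteq> young L"
  shows "0 < excited_weight L D"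
proof -
  have "finite {c \<in> D. fst c \<noteq> 1}" using finite_subset[OF assms finite_young] by simp
  moreover have "0 < hook L c" if "c \<in> D" for c using assms that hook_pos[of "fst c" "snd c"] by auto
  ultimately show ?thesis unfolding excited_weight_def by (intro prod_pos) auto
qed

section \<open>Shallow and deep shapes\<close>

lemma card_columns_of_length_two_less:
  assumes P: "is_partition L" and Y: "(3, 2) \<in> young L"
  shows "card {j. 1 \<le> j \<and> j \<le> part L 1 \<and> conj_part L j = 2} < part L 1 - 1"
proof -
  have "conj_part L j \<noteq> 2" if "1 \<le> j" "j \<le> 2" for j
  proof -
    have "(3, j) \<in> young L" using young_downward_closed[OF P Y, of 3 j] that by auto
    then have "3 \<in> {1..conj_part L j}" unfolding column_young[OF P, symmetric] by simp
    then show ?thesis by simp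
  qed
  then have "{j. 1 \<le> j \<and> j \<le> part L 1 \<and> conj_part L j = 2} \<subseteq> {3..part L 1}"
    by (force simp: not_le)
  then have "card {j. 1 \<le> j \<and> j \<le> part L 1 \<and> conj_part L j = 2} \<le> part L 1 - 2"
    using card_mono[of "{3..part L 1}"] by fastforce
  moreover have "(1, 2) \<in> young L" using young_downward_closed[OF P Y, of 1 2] by auto
  then have "2 \<le> part L 1" unfolding young_eq_part by auto
  ultimately show ?thesis by linarith
qed

lemma card_columns_of_length_two_ge:
  assumes P: "is_partition L" and P12: "part L 1 = part L 2" and Y: "(3, 2) \<notin> young L"
  shows "part L 1 - 1 \<le> card {j. 1 \<le> j \<and> j \<le> part L 1 \<and> conj_part L j = 2}"
proof -
  have "conj_part L j = 2" if "2 \<le> j" "j \<le> part L 1" for j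
  proof -
    have "(2, j) \<in> young L" using that P12 unfolding young_eq_part by auto
    moreover have "(3, j) \<notin> young L" using young_downward_closed[OF P _, of 3 j 3 2] Y that by auto
    ultimately have "2 \<in> {1..conj_part L j}" "3 \<notin> {1..conj_part L j}"
      unfolding column_young[OF P, symmetric] by simp_all
    then show ?thesis by simp
  qed
  then have "{2..part L 1} \<subseteq> {j. 1 \<le> j \<and> j \<le> part L 1 \<and> conj_part L j = 2}" by auto
  from card_mono[OF _ this] show ?thesis by simp
qed

lemma deep_iff_cell_3_2:
  assumes "descent_set I"
  shows "deep I \<longleftrightarrow> (3, 2) \<in> young (lamI I)"
proof -
  define L where "L = lamI I"
  have rp: "ribbon_partition L I" unfolding L_def by (rule ribbon_partition_lamI[OF assms])
  have P: "is_partition L" and P12: "part L 1 = part L 2" using rp unfolding ribbon_partition_def by auto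
  have "sI I + 1 = part L 1" using ribbon_partition_shape(1)[OF rp] unfolding sI_def L_def by simp
  then have w: "wI I = card {j. 1 \<le> j \<and> j \<le> part L 1 \<and> conj_part L j = 2}"
    unfolding wI_def L_def by simp
  show ?thesis
    using card_columns_of_length_two_less[OF P] card_columns_of_length_two_ge[OF P P12]
    unfolding deep_def w sI_def L_def[symmetric] by (meson not_le)
qed

locale nn_shape =
  fixes L mu :: "nat list" and s :: nat
  assumes partition: "is_partition L" and partition_mu: "is_partition mu"
    and first_row: "part L 1 = s + 1" and second_row: "part L 2 = s + 1"
    and young_mu: "young mu = inner L"

lemma nn_shape_lamI:
  assumes "descent_set I"
  shows "nn_shape (lamI I) (muI I) (sI I)"
proof
  have rp: "ribbon_partition (lamI I) I" by (rule ribbon_partition_lamI[OF assms])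
  then show "is_partition (lamI I)" unfolding ribbon_partition_def by simp
  show "is_partition (muI I)" "young (muI I) = inner (lamI I)" by (rule muI_inner[OF assms])+
  show "part (lamI I) 1 = sI I + 1" "part (lamI I) 2 = sI I + 1"
    using ribbon_partition_shape(1)[OF rp] rp unfolding sI_def ribbon_partition_def by auto
qed

text \<open>The excited diagram of a shallow shape with \<open>r\<close> cells left in the first row.\<close>

definition two_row_diagram :: "nat \<Rightarrow> nat \<Rightarrow> cell set" where
  "two_row_diagram s r = {(a, b). (a = 1 \<and> 1 \<le> b \<and> b \<le> r) \<or> (a = 2 \<and> r + 2 \<le> b \<and> b \<le> s + 1)}"

lemma card_first_row_two_row_diagram: "card {c \<in> two_row_diagram s r. fst c = 1} = r"
proof -
  have "{c \<in> two_row_diagram s r. fst c = 1} = Pair 1 ` {1..r}"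
    unfolding two_row_diagram_def by auto
  then show ?thesis by (simp add: card_image inj_on_def)
qed

definition column_diagram :: "nat list \<Rightarrow> nat \<Rightarrow> cell set" where
  "column_diagram L k = {(i, j). j = 1 \<and> 1 \<le> i \<and> i \<le> k} \<union>
     slide ` (inner L - {(i, j). j = 1 \<and> 1 \<le> i \<and> i \<le> k})"

context nn_shape
begin

lemma young_mu_subset: "young mu \<subseteq> young L"
  using young_mu young_minus_outer[OF partition] by blast

lemma first_column_inner: "(i, 1) \<in> inner L \<longleftrightarrow> 1 \<le> i \<and> i \<le> length mu"
proof -
  have "i \<in> {i. (i, 1) \<in> young mu} \<longleftrightarrow> i \<in> {1..length mu}"
    unfolding first_column_young[OF partition_mu] ..
  then show ?thesis using young_mu by simp
qed

lemma excited_without_first_row: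
  assumes D: "D \<in> excited L mu" and no_first_row: "{c \<in> D. fst c = 1} = {}"
  shows "D = slide ` inner L"
proof (rule card_subset_eq)
  have DY: "D \<subseteq> young L" by (rule excited_subset_young[OF D young_mu_subset])
  have no_first_column: "(i, 1) \<notin> D" if "1 \<le> i" for i
    using that
  proof (induction i rule: dec_induct)
    case base
    then show ?case using no_first_row by auto
  next
    case (step n)
    then show ?case using excited_first_column_closed[OF D partition_mu young_mu_subset] by auto
  qed
  show "D \<subseteq> slide ` inner L"
  proof
    fix x assume "x \<in> D"
    moreover obtain i j where x: "x = (i, j)" by fastforce
    ultimately have "(i, j) \<in> young L" "i \<noteq> 1" "j \<noteq> 1" "1 \<le> i" "1 \<le> j"
      using DY no_first_row no_first_column young_cell_pos[of i j L] by auto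
    then have "(i - 1, j - 1) \<in> inner L" "x = slide (i - 1, j - 1)"
      unfolding inner_def x by auto
    then show "x \<in> slide ` inner L" by blast
  qed
  show "card D = card (slide ` inner L)"
    using card_excited[OF D] young_mu card_image[OF inj_on_subset[OF inj_slide subset_UNIV]] by simp
qed (simp add: finite_inner)

context
  assumes shallow: "(3, 2) \<notin> young L"
begin

lemma young_below_second_row: "3 \<le> a \<Longrightarrow> 2 \<le> b \<Longrightarrow> (a, b) \<notin> young L"
  using young_downward_closed[OF partition _, of a b 3 2] shallow by auto

lemma inner_shallow: "inner L = two_row_diagram s s"
proof (rule set_eqI)
  fix x :: cell
  obtain a b where x: "x = (a, b)" by fastforce
  show "x \<in> inner L \<longleftrightarrow> x \<in> two_row_diagram s s"
  proof (cases "a = 1")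
    case True
    then show ?thesis unfolding x inner_def two_row_diagram_def young_eq_part
      using second_row by (auto simp: numeral_2_eq_2)
  next
    case False
    then show ?thesis
      unfolding x inner_def two_row_diagram_def using young_below_second_row[of "a + 1" "b + 1"] by auto
  qed
qed

lemma excited_subset_two_row_diagrams: "excited L mu \<subseteq> two_row_diagram s ` {..s}"
proof
  fix D assume "D \<in> excited L mu"
  then show "D \<in> two_row_diagram s ` {..s}"
  proof (induction rule: excited.induct)
    case base
    then show ?case using young_mu inner_shallow by auto
  next
    case (step D a b)
    then obtain r where r: "r \<le> s" "D = two_row_diagram s r" by auto
    have "a = 1"
      using step.hyps(2,3) r young_below_second_row[of "a + 1" "b + 1"]
      unfolding two_row_diagram_def by auto
    moreover have "b = r"
      using step.hyps(2,4) r \<open>a = 1\<close> unfolding two_row_diagram_def by (cases "b = r") auto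
    ultimately have "insert (a + 1, b + 1) (D - {(a, b)}) = two_row_diagram s (r - 1)"
      using step.hyps(2) r unfolding two_row_diagram_def by auto
    then show ?case using r by auto
  qed
qed

lemma two_row_diagram_excited: "r \<le> s \<Longrightarrow> two_row_diagram s r \<in> excited L mu"
proof (induction "s - r" arbitrary: r)
  case 0
  then show ?case using excited.base[of mu L] young_mu inner_shallow by simp
next
  case (Suc d)
  then have IH: "two_row_diagram s (r + 1) \<in> excited L mu" by simp
  have "insert (1 + 1, r + 1 + 1) (two_row_diagram s (r + 1) - {(1, r + 1)}) \<in> excited L mu"
  proof (rule excited.step[OF IH])
    show "(1 + 1, r + 1 + 1) \<in> young L"
      using Suc second_row unfolding young_eq_part by (auto simp: numeral_2_eq_2)
  qed (auto simp: two_row_diagram_def)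
  moreover have "insert (1 + 1, r + 1 + 1) (two_row_diagram s (r + 1) - {(1, r + 1)}) = two_row_diagram s r"
    using Suc unfolding two_row_diagram_def by auto
  ultimately show ?case by simp
qed

lemma excited_shallow: "excited L mu = two_row_diagram s ` {..s}"
  using excited_subset_two_row_diagrams two_row_diagram_excited by auto

lemma excited_weight_shallow:
  assumes "j \<le> s"
  shows "excited_weight L (two_row_diagram s (s - j)) = fact j"
proof -
  have hook: "hook L (2, x) = s + 2 - x" if "2 \<le> x" "x \<le> s + 1" for x
  proof -
    have "{j'. (2, j') \<in> young L \<and> x \<le> j'} = {x..s + 1}"
      using that second_row unfolding young_eq_part by auto
    then have arm: "card {j'. (2, j') \<in> young L \<and> x \<le> j'} = s + 2 - x" by simp
    have "(i', x) \<notin> young L" if "2 < i'" for i'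
      using young_below_second_row[of i' x] that \<open>2 \<le> x\<close> by simp
    then have "{i'. (i', x) \<in> young L \<and> 2 < i'} = {}" by auto
    then have leg: "card {i'. (i', x) \<in> young L \<and> 2 < i'} = 0" by (simp only: card.empty)
    show ?thesis unfolding hook_def fst_conv snd_conv arm leg by simp
  qed
  have "{c \<in> two_row_diagram s (s - j). fst c \<noteq> 1} = Pair 2 ` {s - j + 2..s + 1}"
    unfolding two_row_diagram_def by auto
  then have "excited_weight L (two_row_diagram s (s - j)) = (\<Prod>c \<in> Pair 2 ` {s - j + 2..s + 1}. hook L c)"
    unfolding excited_weight_def by simp
  also have "\<dots> = (\<Prod>x \<in> {s - j + 2..s + 1}. hook L (2, x))"
    by (subst prod.reindex) (auto simp: inj_on_def)
  also have "\<dots> = (\<Prod>x \<in> {s - j + 2..s + 1}. s + 2 - x)"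
    using hook assms by (intro prod.cong) auto
  also have "\<dots> = fact j"
    using assms
  proof (induction j)
    case (Suc j)
    have "{s - Suc j + 2..s + 1} = insert (s - j + 1) {s - j + 2..s + 1}" using Suc.prems by auto
    then show ?case using Suc by simp
  qed simp
  finally show ?thesis .
qed

lemma nn_coeff_shallow:
  assumes "j \<le> s"
  shows "nn_coeff L mu s j = fact j"
proof -
  have "{D \<in> excited L mu. card {c \<in> D. fst c = 1} = s - j} = {two_row_diagram s (s - j)}"
    unfolding excited_shallow using card_first_row_two_row_diagram by force
  then show ?thesis unfolding nn_coeff_def using excited_weight_shallow[OF assms] by simp
qed

end

context
  assumes deep: "(3, 2) \<in> young L"
begin

lemma two_le_length_mu: "2 \<le> length mu"
  using deep first_column_inner[of 2] unfolding inner_def by (auto simp: numeral_eq_Suc)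

lemma one_le_s: "1 \<le> s"
  using young_downward_closed[OF partition deep, of 1 2] first_row unfolding young_eq_part by auto

lemma hook_2_2: "hook L (2, 2) = s + length mu - 1"
proof -
  have "{j'. (2, j') \<in> young L \<and> 2 \<le> j'} = {2..s + 1}"
    using second_row unfolding young_eq_part by auto
  moreover have "{i'. (i', 2) \<in> young L \<and> 2 < i'} = {3..length mu + 1}"
  proof -
    have "(i', 2) \<in> young L \<longleftrightarrow> (i' - 1, 1) \<in> inner L" if "2 < i'" for i'
      using that unfolding inner_def by (auto simp: numeral_eq_Suc)
    then show ?thesis unfolding first_column_inner by auto
  qed
  ultimately show ?thesis unfolding hook_def using two_le_length_mu by simp
qed

lemma column_diagram_excited:
  assumes "k \<le> length mu"
  shows "column_diagram L k \<in> excited L mu"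
proof -
  let ?col = "{(i, j). j = (1::nat) \<and> 1 \<le> i \<and> i \<le> k}"
  have col: "?col \<subseteq> inner L"
  proof
    fix x assume "x \<in> ?col"
    then obtain i where "x = (i, 1)" "1 \<le> i" "i \<le> k" by blast
    then show "x \<in> inner L" using first_column_inner[of i] assms by simp
  qed
  have "(inner L - (inner L - ?col)) \<union> slide ` (inner L - ?col) \<in> excited L mu"
  proof (rule excited_slide_closed[OF young_mu])
    fix i j d assume ij: "(i, j) \<in> inner L - ?col" and "d \<in> {(i, j + 1), (i + 1, j), (i + 1, j + 1)}"
      and "d \<in> inner L"
    moreover have "1 \<le> i" "1 \<le> j" using ij unfolding inner_def by auto
    ultimately show "d \<in> inner L - ?col" by auto
  qed blast
  moreover have "inner L - (inner L - ?col) = ?col" using col by blast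
  ultimately show ?thesis unfolding column_diagram_def by simp
qed

lemma column_diagram_subset_young: "k \<le> length mu \<Longrightarrow> column_diagram L k \<subseteq> young L"
  using excited_subset_young[OF column_diagram_excited young_mu_subset] .

lemma first_row_column_diagram: "1 \<le> k \<Longrightarrow> {c \<in> column_diagram L k. fst c = 1} = {(1, 1)}"
  unfolding column_diagram_def by auto

lemma excited_weight_column_diagram_less:
  assumes k: "1 \<le> k" "k < length mu"
  shows "excited_weight L (column_diagram L k) < excited_weight L (column_diagram L (k + 1))"
proof -
  define B where "B = column_diagram L (k + 1) - {(k + 1, 1)}"
  have "(k + 1, 1) \<in> inner L" using first_column_inner k by simp
  then have "column_diagram L k = insert (k + 2, 2) B"
    unfolding B_def column_diagram_def
    by (auto simp: set_eq_iff split_paired_All Pair_in_slide_image numeral_eq_Suc)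
  moreover have "(k + 2, 2) \<notin> B" "(k + 1, 1) \<notin> B"
    unfolding B_def column_diagram_def by (auto simp: Pair_in_slide_image numeral_eq_Suc)
  moreover have "column_diagram L (k + 1) = insert (k + 1, 1) B"
    unfolding B_def column_diagram_def by auto
  moreover have BY: "B \<subseteq> young L" using column_diagram_subset_young[of "k + 1"] k unfolding B_def by auto
  moreover have "hook L (k + 1 + 1, 1 + 1) < hook L (k + 1, 1)"
    by (rule hook_slide_less[OF partition]) (use \<open>(k + 1, 1) \<in> inner L\<close> in \<open>auto simp: inner_def\<close>)
  ultimately show ?thesis
    using excited_weight_pos[OF BY] finite_subset[OF BY finite_young] k
    by (simp add: excited_weight_insert numeral_eq_Suc)
qed

lemma excited_weight_column_diagram_mono:
  "1 \<le> k \<Longrightarrow> k \<le> length mu \<Longrightarrow>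
    excited_weight L (column_diagram L 1) \<le> excited_weight L (column_diagram L k)"
proof (induction k rule: dec_induct)
  case (step n)
  then show ?case using excited_weight_column_diagram_less[of n] by simp
qed simp

lemma excited_weight_slide_inner:
  "excited_weight L (slide ` inner L) = hook L (2, 2) * excited_weight L (column_diagram L 1)"
proof -
  define B where "B = slide ` (inner L - {(1, 1)})"
  have "(1, 1) \<in> inner L" using first_column_inner two_le_length_mu by simp
  then have "slide ` inner L = insert (2, 2) B" "column_diagram L 1 = insert (1, 1) B"
    unfolding B_def column_diagram_def
    by (auto simp: set_eq_iff split_paired_All Pair_in_slide_image numeral_eq_Suc)
  moreover have "(2, 2) \<notin> B" "(1, 1) \<notin> B" "finite B"
    unfolding B_def using finite_inner by (auto simp: Pair_in_slide_image numeral_eq_Suc)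
  ultimately show ?thesis by (simp add: excited_weight_insert)
qed

lemma nn_coeff_last_le: "nn_coeff L mu s s \<le> excited_weight L (slide ` inner L)"
proof -
  have sub: "{D \<in> excited L mu. card {c \<in> D. fst c = 1} = s - s} \<subseteq> {slide ` inner L}"
  proof
    fix D assume D: "D \<in> {D \<in> excited L mu. card {c \<in> D. fst c = 1} = s - s}"
    then have "finite D" using excited_subset_young[OF _ young_mu_subset] finite_subset finite_young by blast
    then have "{c \<in> D. fst c = 1} = {}" using D by simp
    then show "D \<in> {slide ` inner L}" using excited_without_first_row D by blast
  qed
  have "sum (excited_weight L) {D \<in> excited L mu. card {c \<in> D. fst c = 1} = s - s}
      \<le> sum (excited_weight L) {slide ` inner L}"
    by (rule sum_mono2[OF _ sub]) simp_all
  then show ?thesis unfolding nn_coeff_def by simp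
qed

lemma sum_column_diagrams_le:
  "(\<Sum>k = 1..length mu. excited_weight L (column_diagram L k)) \<le> nn_coeff L mu s (s - 1)"
proof -
  have inj: "inj_on (column_diagram L) {1..length mu}"
  proof (rule inj_onI)
    fix k k' assume "k \<in> {1..length mu}" "k' \<in> {1..length mu}" "column_diagram L k = column_diagram L k'"
    then have "(k, 1) \<in> column_diagram L k'" "(k', 1) \<in> column_diagram L k"
      unfolding column_diagram_def by auto
    then show "k = k'" unfolding column_diagram_def by (auto simp: Pair_in_slide_image)
  qed
  have sub: "column_diagram L ` {1..length mu} \<subseteq> {D \<in> excited L mu. card {c \<in> D. fst c = 1} = s - (s - 1)}"
    using column_diagram_excited first_row_column_diagram one_le_s by auto
  have "(\<Sum>k = 1..length mu. excited_weight L (column_diagram L k)) =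
      sum (excited_weight L) (column_diagram L ` {1..length mu})"
    using sum.reindex[OF inj, of "excited_weight L"] by (simp add: comp_def)
  also have "\<dots> \<le> nn_coeff L mu s (s - 1)"
    unfolding nn_coeff_def using finite_excited[OF young_mu_subset] by (intro sum_mono2[OF _ sub]) auto
  finally show ?thesis .
qed

text \<open>The only excited diagram without first-row cells is \<open>\<mu>\<close> slid as a whole; it weighs
  \<open>h(2,2) = s + \<ell>(\<mu>) - 1 \<le> s \<ell>(\<mu>)\<close> times the diagram keeping only the cell \<open>(1,1)\<close>. The
  \<open>\<ell>(\<mu>)\<close> diagrams keeping the first column of \<open>\<mu>\<close> down to row \<open>k\<close> have one first-row cell,
  and each weighs at least as much as the one for \<open>k = 1\<close>, the one for \<open>k = 2\<close> strictly more.\<close>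

lemma nn_coeff_last_less: "nn_coeff L mu s s < s * nn_coeff L mu s (s - 1)"
proof -
  let ?m = "length mu" and ?w = "\<lambda>k. excited_weight L (column_diagram L k)"
  have "s + ?m - 1 \<le> s * ?m" using one_le_s two_le_length_mu by (cases s; cases ?m) auto
  have "nn_coeff L mu s s \<le> (s + ?m - 1) * ?w 1"
    using nn_coeff_last_le excited_weight_slide_inner hook_2_2 by simp
  also have "\<dots> \<le> s * (\<Sum>k = 1..?m. ?w 1)"
    using \<open>s + ?m - 1 \<le> s * ?m\<close> by simp
  also have "\<dots> < s * (\<Sum>k = 1..?m. ?w k)"
  proof (rule mult_strict_left_mono[OF sum_strict_mono_ex1])
    show "\<forall>k\<in>{1..?m}. ?w 1 \<le> ?w k" using excited_weight_column_diagram_mono by auto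
    show "\<exists>k\<in>{1..?m}. ?w 1 < ?w k"
      using excited_weight_column_diagram_less[of 1] two_le_length_mu
      by (intro bexI[of _ 2]) (auto simp: numeral_2_eq_2)
  qed (use one_le_s in auto)
  also have "\<dots> \<le> s * nn_coeff L mu s (s - 1)"
    using sum_column_diagrams_le by simp
  finally show ?thesis .
qed

end

end

lemma div_fact_less:
  fixes a b s :: nat
  assumes "1 \<le> s" "a < s * b"
  shows "real a / fact s < real b / fact (s - 1)"
proof -
  have "(fact s :: real) = real s * fact (s - 1)" using fact_reduce[of s] assms(1) by simp
  moreover have "real a < real s * real b" using assms(2) by (simp flip: of_nat_mult)
  ultimately show ?thesis using assms(1) by (simp add: field_simps)
qed

theorem corollary4p7:
  fixes I :: "nat set"
  assumes "descent_set I"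
  shows "(\<forall>j \<le> sI I. real (NN_coeff I j) / fact j = real (NN_coeff I 0) / fact 0)
           \<longleftrightarrow> shallow I"
proof -
  interpret nn_shape "lamI I" "muI I" "sI I" by (rule nn_shape_lamI[OF assms])
  show ?thesis
  proof (cases "(3, 2) \<in> young (lamI I)")
    case True
    then have "\<not> shallow I" using deep_iff_cell_3_2[OF assms] unfolding shallow_def by simp
    moreover have "real (NN_coeff I (sI I)) / fact (sI I)
        < real (NN_coeff I (sI I - 1)) / fact (sI I - 1)"
      unfolding NN_coeff_eq_nn_coeff
      using one_le_s[OF True] nn_coeff_last_less[OF True] by (rule div_fact_less)
    ultimately show ?thesis by (metis diff_le_self order.refl less_irrefl)
  next
    case False
    then have "shallow I" using deep_iff_cell_3_2[OF assms] unfolding shallow_def by simp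
    moreover have ratio: "real (NN_coeff I j) / fact j = 1" if "j \<le> sI I" for j
      unfolding NN_coeff_eq_nn_coeff nn_coeff_shallow[OF False that] by simp
    ultimately show ?thesis using ratio[OF le0] by metis
  qed
qed

end
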